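(* Consider a wormhole with two 1D boundaries, with three atomic regions $A,B,C$ on the left boundary and $A',B',C'$ on the right boundary. Let an input vector $v\in\mathbb{R}_{\ge 0}^{63}$ specify a value $S(R)$ for every nonempty subset $R\subseteq\{A,B,C,A',B',C'\}$. Let $V\subseteq\mathbb{R}_{\ge0}^{63}$ be the set of input vectors for which there exists a planar graph model. Then $V$ is not closed under convex combinations.
   Context: The boundary consists of two circles, the left one divided into the arcs $A,B,C$ in this cyclic order and the right one into $A',B',C'$. A graph model for $v$ is a finite undirected graph with nonnegative real edge weights containing six distinguished boundary vertices $v_A,\ldots,v_{C'}$ such that for every nonempty $R$, the min-cut value between the boundary vertices of the regions in $R$ and the remaining boundary vertices equals $S(R)$ (the min-cut value between two disjoint vertex sets is the minimum total weight of an edge set whose removal disconnects every vertex of the first from every vertex of the second). It is planar if it can be drawn without edge crossings on a closed annulus with $v_A,v_B,v_C$ on one boundary circle in this cyclic order and $v_{A'},v_{B'},v_{C'}$ on the other in this cyclic order. *)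

theory Defs
  imports "HOL-Analysis.Analysis"
begin

datatype region = RA | RB | RC | RA' | RB' | RC'

text \<open>We represent it as a function on region sets, with the (irrelevant)
  value at the empty set normalised to 0.\<close>
definition input_vector :: "(region set \<Rightarrow> real) \<Rightarrow> bool" where
  "input_vector S \<longleftrightarrow> S {} = 0 \<and> (\<forall>R. R \<noteq> {} \<longrightarrow> 0 \<le> S R)"

definition wgraph :: "nat set \<Rightarrow> nat set set \<Rightarrow> (nat set \<Rightarrow> real) \<Rightarrow> bool" where
  "wgraph Vs E w \<longleftrightarrow> finite Vs \<and> (\<forall>e\<in>E. card e = 2 \<and> e \<subseteq> Vs) \<and> (\<forall>e\<in>E. 0 \<le> w e)"

definition adj :: "nat set set \<Rightarrow> (nat \<times> nat) set" where
  "adj E = {(x, y). {x, y} \<in> E}"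

definition separates :: "nat set set \<Rightarrow> nat set set \<Rightarrow> nat set \<Rightarrow> nat set \<Rightarrow> bool" where
  "separates E F X Y \<longleftrightarrow> (\<forall>x\<in>X. \<forall>y\<in>Y. (x, y) \<notin> (adj (E - F))\<^sup>*)"

definition mincut :: "nat set set \<Rightarrow> (nat set \<Rightarrow> real) \<Rightarrow> nat set \<Rightarrow> nat set \<Rightarrow> real" where
  "mincut E w X Y = Min {sum w F | F. F \<subseteq> E \<and> separates E F X Y}"

definition graph_model ::
  "nat set \<Rightarrow> nat set set \<Rightarrow> (nat set \<Rightarrow> real) \<Rightarrow> (region \<Rightarrow> nat) \<Rightarrow> (region set \<Rightarrow> real) \<Rightarrow> bool" where
  "graph_model Vs E w b S \<longleftrightarrow>
     wgraph Vs E w \<and> inj b \<and> range b \<subseteq> Vs \<and>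
     (\<forall>R. R \<noteq> {} \<longrightarrow> mincut E w (b ` R) (b ` (UNIV - R)) = S R)"

definition annulus :: "complex set" where
  "annulus = {z. 1 \<le> norm z \<and> norm z \<le> 2}"

definition ccw :: "complex \<Rightarrow> complex \<Rightarrow> complex \<Rightarrow> bool" where
  "ccw p q s \<longleftrightarrow> Im (cnj (q - p) * (s - p)) > 0"

definition annulus_drawing ::
  "nat set \<Rightarrow> nat set set \<Rightarrow> (region \<Rightarrow> nat) \<Rightarrow> (nat \<Rightarrow> complex) \<Rightarrow> (nat set \<Rightarrow> real \<Rightarrow> complex) \<Rightarrow> bool" where
  "annulus_drawing Vs E b pos \<gamma> \<longleftrightarrow>
     inj_on pos Vs \<and> pos ` Vs \<subseteq> annulus \<and>
     (\<forall>e\<in>E. arc (\<gamma> e) \<and> path_image (\<gamma> e) \<subseteq> annulus \<and>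
        (\<exists>u v. e = {u, v} \<and> pathstart (\<gamma> e) = pos u \<and> pathfinish (\<gamma> e) = pos v) \<and>
        path_image (\<gamma> e) \<inter> pos ` Vs \<subseteq> pos ` e) \<and>
     (\<forall>e\<in>E. \<forall>f\<in>E. e \<noteq> f \<longrightarrow> path_image (\<gamma> e) \<inter> path_image (\<gamma> f) \<subseteq> pos ` (e \<inter> f)) \<and>
     (\<forall>r\<in>{RA, RB, RC}. norm (pos (b r)) = 1) \<and>
     (\<forall>r\<in>{RA', RB', RC'}. norm (pos (b r)) = 2) \<and>
     ccw (pos (b RA)) (pos (b RB)) (pos (b RC)) \<and>
     ccw (pos (b RA')) (pos (b RB')) (pos (b RC'))"

definition planar_graph_model :: "(region set \<Rightarrow> real) \<Rightarrow> bool" where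
  "planar_graph_model S \<longleftrightarrow>
     (\<exists>Vs E w b pos \<gamma>. graph_model Vs E w b S \<and> annulus_drawing Vs E b pos \<gamma>)"

definition V_planar :: "(region set \<Rightarrow> real) set" where
  "V_planar = {S. input_vector S \<and> planar_graph_model S}"

end

theory Submission
  imports Defs
begin

(* A graph model of an input vector S with S{A,A'} = S{B,C'} = S{C,B'} = 0 and S{A}, S{B},
   S{C} > 0 joins, through edges of positive weight, A to A' and to no other boundary vertex,
   B only to C' and C only to B'.  In a planar model these three components are drawn as
   pairwise disjoint paths crossing the annulus from the inner to the outer circle.  Lifting
   such paths by a continuous logarithm to the strip 0 <= Re z <= ln 2, Fashoda's theorem shows
   that disjoint crossings keep the cyclic order of their endpoints; but A, B, C are
   counterclockwise while A', C', B' are clockwise.  The min-cut vector v of the graph with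
   edges AA', BC' and the vector u of the graph with the single edge CB' both have planar
   models with radial edges, and their midpoint (v + u)/2 has exactly the forbidden pattern. *)

section \<open>Disjoint crossings of a strip\<close>

lemma fashoda_complex:
  fixes f g :: "real \<Rightarrow> complex"
  assumes "path f" "path g" and "path_image f \<subseteq> cbox a b" "path_image g \<subseteq> cbox a b"
    and "Re (pathstart f) = Re a" "Re (pathfinish f) = Re b"
    and "Im (pathstart g) = Im a" "Im (pathfinish g) = Im b"
  obtains z where "z \<in> path_image f" "z \<in> path_image g"
proof -
  define v :: "complex \<Rightarrow> real^2" where "v z = (\<chi> i. if i = 1 then Re z else Im z)" for z
  have v_nth [simp]: "v z $ 1 = Re z" "v z $ 2 = Im z" for z
    by (simp_all add: v_def)
  have "continuous_on UNIV v"
    unfolding v_def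
    by (intro continuous_on_vec_lambda, rename_tac i, case_tac "i = 1") (auto intro!: continuous_intros)
  then have paths: "path (v \<circ> f)" "path (v \<circ> g)"
    using assms(1,2) by (auto intro: path_continuous_image continuous_on_subset)
  have "v ` cbox a b \<subseteq> cbox (v a) (v b)"
    by (auto simp: in_cbox_complex_iff mem_box_cart forall_2)
  then have "path_image (v \<circ> f) \<subseteq> cbox (v a) (v b)"
    and "path_image (v \<circ> g) \<subseteq> cbox (v a) (v b)"
    using assms(3,4) by (auto simp: path_image_compose)
  moreover have "(pathstart (v \<circ> f))$1 = (v a)$1" "(pathfinish (v \<circ> f))$1 = (v b)$1"
     "(pathstart (v \<circ> g))$2 = (v a)$2" "(pathfinish (v \<circ> g))$2 = (v b)$2"
    using assms(5-8) by (simp_all add: pathstart_def pathfinish_def)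
  ultimately obtain z where "z \<in> path_image (v \<circ> f)" "z \<in> path_image (v \<circ> g)"
    using fashoda[OF paths] by blast
  moreover have "inj v"
    by (rule injI) (simp add: complex_eq_iff vec_eq_iff forall_2)
  ultimately show ?thesis
    using that unfolding path_image_compose by (auto dest: injD)
qed

lemma strip_crossings_meet:
  fixes P Q :: "real \<Rightarrow> complex"
  assumes paths: "path P" "path Q" and "l > 0"
    and strip: "\<And>z. z \<in> path_image P \<union> path_image Q \<Longrightarrow>
      0 \<le> Re z \<and> Re z \<le> l \<and> -M < Im z \<and> Im z < M"
    and P_ends: "pathstart P = Complex 0 p0" "pathfinish P = Complex l p1"
    and Q_ends: "pathstart Q = Complex 0 q0" "pathfinish Q = Complex l q1"
    and "p0 < q0" "q1 < p1"
  shows "path_image P \<inter> path_image Q \<noteq> {}"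
proof
  assume disjoint: "path_image P \<inter> path_image Q = {}"
  have bounds: "-M < q0" "q0 < M" "-M < q1" "q1 < M" "-M < p0" "p0 < M" "-M < p1" "p1 < M"
    using strip[OF UnI1[OF pathstart_in_path_image[of P]]] strip[OF UnI1[OF pathfinish_in_path_image[of P]]]
      strip[OF UnI2[OF pathstart_in_path_image[of Q]]] strip[OF UnI2[OF pathfinish_in_path_image[of Q]]]
    unfolding P_ends Q_ends by simp_all
  (* Extend Q horizontally to the vertical sides of a box and P vertically to its horizontal
     sides.  By Fashoda's theorem the extensions meet, and since p0 < q0 and q1 < p1 any
     meeting point is a common point of P and Q. *)
  define f where "f = linepath (Complex (-1) q0) (pathstart Q) +++ Q +++
                      linepath (pathfinish Q) (Complex (l+1) q1)"
  define g where "g = linepath (Complex (-1/2) (-M)) (Complex (-1/2) p0) +++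
                      linepath (Complex (-1/2) p0) (pathstart P) +++ P +++
                      linepath (pathfinish P) (Complex (l+1/2) p1) +++
                      linepath (Complex (l+1/2) p1) (Complex (l+1/2) M)"
  have f_image: "z \<in> path_image f \<longleftrightarrow>
      (Im z = q0 \<and> -1 \<le> Re z \<and> Re z \<le> 0) \<or> z \<in> path_image Q \<or>
      (Im z = q1 \<and> l \<le> Re z \<and> Re z \<le> l+1)" for z
    using \<open>l > 0\<close> unfolding f_def
    by (simp add: path_image_join Q_ends closed_segment_same_Im closed_segment_eq_real_ivl)
  have g_image: "z \<in> path_image g \<longleftrightarrow>
      (Re z = -1/2 \<and> -M \<le> Im z \<and> Im z \<le> p0) \<or>
      (Im z = p0 \<and> -1/2 \<le> Re z \<and> Re z \<le> 0) \<or>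
      z \<in> path_image P \<or> (Im z = p1 \<and> l \<le> Re z \<and> Re z \<le> l+1/2) \<or>
      (Re z = l+1/2 \<and> p1 \<le> Im z \<and> Im z \<le> M)" for z
    using \<open>l > 0\<close> bounds unfolding g_def
    by (simp add: path_image_join P_ends closed_segment_same_Im closed_segment_same_Re
        closed_segment_eq_real_ivl)
  have "path f" "path g"
    unfolding f_def g_def using paths by (simp_all add: P_ends Q_ends)
  moreover have "path_image f \<subseteq> cbox (Complex (-1) (-M)) (Complex (l+1) M)"
    using f_image strip bounds \<open>l > 0\<close> by (fastforce simp: in_cbox_complex_iff)
  moreover have "path_image g \<subseteq> cbox (Complex (-1) (-M)) (Complex (l+1) M)"
    using g_image strip bounds \<open>l > 0\<close> by (fastforce simp: in_cbox_complex_iff)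
  ultimately obtain z where "z \<in> path_image f" "z \<in> path_image g"
    by (rule fashoda_complex) (simp_all add: f_def g_def)
  moreover have "z \<notin> {Complex 0 q0, Complex l q1}" if "z \<in> path_image P"
    using that disjoint pathstart_in_path_image[of Q] pathfinish_in_path_image[of Q]
    unfolding Q_ends by blast
  moreover have "z \<notin> {Complex 0 p0, Complex l p1}" if "z \<in> path_image Q"
    using that disjoint pathstart_in_path_image[of P] pathfinish_in_path_image[of P]
    unfolding P_ends by blast
  ultimately show False
    using f_image[of z] g_image[of z] strip[of z] disjoint
      \<open>p0 < q0\<close> \<open>q1 < p1\<close> \<open>l > 0\<close>
    by (auto simp: complex_eq_iff)
qed

lemma strip_crossings_keep_order:
  fixes P Q :: "real \<Rightarrow> complex"
  assumes paths: "path P" "path Q" and "l > 0"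
    and strip: "\<And>z. z \<in> path_image P \<union> path_image Q \<Longrightarrow> 0 \<le> Re z \<and> Re z \<le> l"
    and ends: "Re (pathstart P) = 0" "Re (pathfinish P) = l"
      "Re (pathstart Q) = 0" "Re (pathfinish Q) = l"
    and disjoint: "path_image P \<inter> path_image Q = {}"
    and "Im (pathstart P) < Im (pathstart Q)"
  shows "Im (pathfinish P) < Im (pathfinish Q)"
proof (rule ccontr)
  assume "\<not> ?thesis"
  moreover have "pathfinish P \<noteq> pathfinish Q"
    using disjoint pathfinish_in_path_image[of P] pathfinish_in_path_image[of Q] by auto
  ultimately have "Im (pathfinish Q) < Im (pathfinish P)"
    using ends by (auto simp: complex_eq_iff)
  obtain M where M: "\<forall>z \<in> path_image P \<union> path_image Q. norm z < M"
    using bounded_pos_less bounded_Un bounded_path_image paths by metis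
  have Im_bounds: "-M < Im z \<and> Im z < M" if "z \<in> path_image P \<union> path_image Q" for z
  proof -
    have "norm z < M"
      using M that by blast
    then show ?thesis
      using abs_Im_le_cmod[of z] by linarith
  qed
  show False
    using strip_crossings_meet[OF paths \<open>l > 0\<close>, of M "Im (pathstart P)" "Im (pathfinish P)"
        "Im (pathstart Q)" "Im (pathfinish Q)"]
      strip Im_bounds ends disjoint \<open>Im (pathstart P) < _\<close> \<open>Im (pathfinish Q) < _\<close>
    by (simp add: complex_eq_iff)
qed

section \<open>Disjoint crossings of the annulus\<close>

lemma sin_diff_pos_iff:
  fixes x y :: real
  assumes "0 < x" "x < pi" "0 < y" "y < pi"
  shows "0 < sin (y - x) \<longleftrightarrow> x < y"
proof
  assume "x < y"
  then show "0 < sin (y - x)"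
    using assms by (intro sin_gt_zero) simp_all
next
  assume "0 < sin (y - x)"
  show "x < y"
  proof (rule ccontr)
    assume "\<not> x < y"
    then have "0 \<le> sin (x - y)"
      using assms by (intro sin_ge_zero) auto
    moreover have "sin (y - x) = - sin (x - y)"
      by (metis minus_diff_eq sin_minus)
    ultimately show False
      using \<open>0 < sin (y - x)\<close> by linarith
  qed
qed

lemma ccw_on_circle_iff:
  fixes r a b c :: real
  assumes "r > 0" and "a < b" "b < a + 2*pi" and "a < c" "c < a + 2*pi"
  shows "ccw (of_real r * cis a) (of_real r * cis b) (of_real r * cis c) \<longleftrightarrow> b < c"
proof -
  define x y where "x = (b - a) / 2" and "y = (c - a) / 2"
  have sines: "sin (c - b) + sin (b - a) - sin (c - a) = 4 * sin x * sin y * sin (y - x)"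
  proof -
    have "c - b = 2*y - 2*x" "b - a = 2*x" "c - a = 2*y"
      unfolding x_def y_def by (simp_all add: field_simps)
    moreover have "sin (2*y - 2*x) + sin (2*x) - sin (2*y) = 4 * sin x * sin y * sin (y - x)"
      by (simp add: sin_diff cos_diff sin_double cos_double)
        (use sin_cos_squared_add[of x] sin_cos_squared_add[of y] in algebra)
    ultimately show ?thesis
      by (simp only:)
  qed
  have "Im (cnj (of_real r * cis b - of_real r * cis a) * (of_real r * cis c - of_real r * cis a))
      = r^2 * (sin (c - b) + sin (b - a) - sin (c - a))"
    by (simp add: sin_diff algebra_simps power2_eq_square)
  also have "\<dots> = (4 * r^2 * sin x * sin y) * sin (y - x)"
    unfolding sines by simp
  finally have "Im (cnj (of_real r * cis b - of_real r * cis a) * (of_real r * cis c - of_real r * cis a))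
      = (4 * r^2 * sin x * sin y) * sin (y - x)" .
  moreover have "0 < x" "x < pi" "0 < y" "y < pi"
    using assms unfolding x_def y_def by simp_all
  moreover from this have "0 < 4 * r^2 * sin x * sin y"
    using \<open>r > 0\<close> sin_gt_zero[of x] sin_gt_zero[of y] by simp
  ultimately have
    "ccw (of_real r * cis a) (of_real r * cis b) (of_real r * cis c) \<longleftrightarrow> 0 < sin (y - x)"
    unfolding ccw_def by (metis mult_pos_pos zero_less_mult_pos)
  also have "\<dots> \<longleftrightarrow> x < y"
    using \<open>0 < x\<close> \<open>x < pi\<close> \<open>0 < y\<close> \<open>y < pi\<close> by (rule sin_diff_pos_iff)
  finally show ?thesis
    unfolding x_def y_def by simp
qed

lemma ccw_imp_not_ccw_swap: "ccw p q s \<Longrightarrow> \<not> ccw p s q"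
  unfolding ccw_def by (simp add: algebra_simps)

definition annulus_crossing :: "(real \<Rightarrow> complex) \<Rightarrow> bool" where
  "annulus_crossing g \<longleftrightarrow>
     path g \<and> path_image g \<subseteq> annulus \<and> norm (pathstart g) = 1 \<and> norm (pathfinish g) = 2"

definition path_logarithm ::
  "(real \<Rightarrow> complex) \<Rightarrow> (real \<Rightarrow> complex) \<Rightarrow> bool" where
  "path_logarithm g L \<longleftrightarrow> path L \<and> (\<forall>t\<in>{0..1}. g t = exp (L t))"

lemma path_logarithm_add_2pi:
  assumes "path_logarithm g L"
  shows "path_logarithm g (\<lambda>t. L t + \<i> * (of_int k * (of_real pi * 2)))"
  using assms unfolding path_logarithm_def path_def by (auto intro!: continuous_intros)

lemma path_logarithm_polar:
  assumes "path_logarithm g L" "t \<in> {0..1}"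
  shows "g t = of_real (norm (g t)) * cis (Im (L t))" "Re (L t) = ln (norm (g t))"
proof -
  have g: "g t = exp (L t)"
    using assms unfolding path_logarithm_def by blast
  show "g t = of_real (norm (g t)) * cis (Im (L t))"
    by (metis g exp_eq_polar norm_exp_eq_Re)
  show "Re (L t) = ln (norm (g t))"
    unfolding g by simp
qed

lemma path_logarithm_exists:
  assumes "path g" "0 \<notin> path_image g"
  obtains L where "path_logarithm g L" "\<alpha> < Im (L 0)" "Im (L 0) \<le> \<alpha> + 2 * pi"
proof -
  have "continuous_on {0..1} g" "\<And>t. t \<in> {0..1} \<Longrightarrow> g t \<noteq> 0"
    using assms unfolding path_def path_image_def by auto
  then obtain L where "continuous_on {0..1} L" "\<And>t. t \<in> {0..1} \<Longrightarrow> g t = exp (L t)"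
    using continuous_logarithm_on_contractible convex_imp_contractible[of "{0..1::real}"]
    by (metis convex_real_interval(5))
  then have L: "path_logarithm g L"
    unfolding path_logarithm_def path_def by blast
  define k where "k = \<lfloor>(\<alpha> - Im (L 0)) / (2 * pi)\<rfloor> + 1"
  have "(\<alpha> - Im (L 0)) / (2 * pi) < k" "k - 1 \<le> (\<alpha> - Im (L 0)) / (2 * pi)"
    unfolding k_def by linarith+
  then have "\<alpha> - Im (L 0) < k * (2 * pi)" "(k - 1) * (2 * pi) \<le> \<alpha> - Im (L 0)"
    using pi_gt_zero by (simp_all add: divide_less_eq le_divide_eq)
  then show ?thesis
    using that[OF path_logarithm_add_2pi[OF L, of k]] by (simp add: algebra_simps)
qed

lemma path_logarithm_image_in_strip:
  assumes "path_logarithm g L" "path_image g \<subseteq> annulus" "z \<in> path_image L"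
  shows "0 \<le> Re z \<and> Re z \<le> ln 2"
proof -
  obtain t where t: "t \<in> {0..1}" "z = L t"
    using assms(3) unfolding path_image_def by blast
  then have "g t \<in> annulus"
    using assms(2) unfolding path_image_def by blast
  then have "1 \<le> norm (g t)" "norm (g t) \<le> 2"
    unfolding annulus_def by auto
  then have "0 \<le> ln (norm (g t))" "ln (norm (g t)) \<le> ln 2"
    by (simp, intro ln_mono) auto
  then show ?thesis
    using path_logarithm_polar(2)[OF assms(1) t(1)] t(2) by simp
qed

lemma path_logarithm_disjoint:
  assumes "path_logarithm g L" "path_logarithm h M" "path_image g \<inter> path_image h = {}"
  shows "path_image L \<inter> path_image M = {}"
  using assms unfolding path_logarithm_def path_image_def by (auto simp: disjoint_iff)

lemma annulus_crossing_logarithms_keep_order: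
  assumes g: "annulus_crossing g" "path_logarithm g L"
    and h: "annulus_crossing h" "path_logarithm h M"
    and disjoint: "path_image g \<inter> path_image h = {}"
    and "Im (L 0) < Im (M 0)"
  shows "Im (L 1) < Im (M 1)"
proof -
  have ends: "Re (L 0) = 0" "Re (L 1) = ln 2" "Re (M 0) = 0" "Re (M 1) = ln 2"
    using g h path_logarithm_polar(2)[of g L] path_logarithm_polar(2)[of h M]
    unfolding annulus_crossing_def pathstart_def pathfinish_def by auto
  have "Im (pathfinish L) < Im (pathfinish M)"
  proof (rule strip_crossings_keep_order)
    show "path L" "path M"
      using g h unfolding path_logarithm_def by auto
    show "0 \<le> Re z \<and> Re z \<le> ln 2" if "z \<in> path_image L \<union> path_image M" for z
      using that g h path_logarithm_image_in_strip unfolding annulus_crossing_def by blast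
    show "path_image L \<inter> path_image M = {}"
      using path_logarithm_disjoint g(2) h(2) disjoint .
  qed (use ends \<open>Im (L 0) < Im (M 0)\<close> in \<open>simp_all add: pathstart_def pathfinish_def\<close>)
  then show ?thesis
    by (simp add: pathfinish_def)
qed

lemma annulus_crossing_ends:
  assumes "annulus_crossing g" "path_logarithm g L"
  shows "pathstart g = cis (Im (L 0))" "pathfinish g = 2 * cis (Im (L 1))"
  using assms path_logarithm_polar(1)[of g L 0] path_logarithm_polar(1)[of g L 1]
  unfolding annulus_crossing_def pathstart_def pathfinish_def by auto

lemma annulus_crossings_preserve_ccw:
  assumes crossings: "annulus_crossing g1" "annulus_crossing g2" "annulus_crossing g3"
    and disjoint: "path_image g1 \<inter> path_image g2 = {}" "path_image g1 \<inter> path_image g3 = {}"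
      "path_image g2 \<inter> path_image g3 = {}"
    and "ccw (pathstart g1) (pathstart g2) (pathstart g3)"
  shows "ccw (pathfinish g1) (pathfinish g2) (pathfinish g3)"
proof -
  have "path g" "0 \<notin> path_image g" if "annulus_crossing g" for g
    using that unfolding annulus_crossing_def annulus_def by auto
  then obtain L1 L2 L3
    where L1: "path_logarithm g1 L1"
      and L2: "path_logarithm g2 L2" "Im (L1 0) < Im (L2 0)" "Im (L2 0) \<le> Im (L1 0) + 2 * pi"
      and L3: "path_logarithm g3 L3" "Im (L1 0) < Im (L3 0)" "Im (L3 0) \<le> Im (L1 0) + 2 * pi"
    using crossings path_logarithm_exists by metis
  note ends = annulus_crossing_ends[OF crossings(1) L1] annulus_crossing_ends[OF crossings(2) L2(1)]
    annulus_crossing_ends[OF crossings(3) L3(1)]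
  have "pathstart g1 \<noteq> pathstart g2" "pathstart g1 \<noteq> pathstart g3"
    using disjoint(1,2) pathstart_in_path_image[of g1] pathstart_in_path_image[of g2]
      pathstart_in_path_image[of g3] by auto
  then have "Im (L2 0) \<noteq> Im (L1 0) + 2 * pi" "Im (L3 0) \<noteq> Im (L1 0) + 2 * pi"
    unfolding ends by (auto simp: complex_eq_iff)
  then have "Im (L2 0) < Im (L3 0)"
    using assms(7) L2 L3 ccw_on_circle_iff[of 1 "Im (L1 0)" "Im (L2 0)" "Im (L3 0)"]
    unfolding ends by simp
  then have "Im (L1 1) < Im (L2 1)" "Im (L2 1) < Im (L3 1)"
    using annulus_crossing_logarithms_keep_order[OF crossings(1) L1 crossings(2) L2(1) disjoint(1) L2(2)]
      annulus_crossing_logarithms_keep_order[OF crossings(2) L2(1) crossings(3) L3(1) disjoint(3)]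
    by simp_all
  moreover have "Im (L3 1) < Im (L1 1) + 2 * pi"
    \<comment> \<open>compare g3 with the lift of g1 shifted by 2 pi, which starts above L3\<close>
    using annulus_crossing_logarithms_keep_order[OF crossings(3) L3(1) crossings(1)
        path_logarithm_add_2pi[OF L1, of 1]] disjoint(2) L3(3) \<open>Im (L3 0) \<noteq> _\<close>
    by (simp add: Int_commute)
  ultimately show ?thesis
    using ccw_on_circle_iff[of 2 "Im (L1 1)" "Im (L2 1)" "Im (L3 1)"]
    unfolding ends by simp
qed

section \<open>Minimum cuts and graph models\<close>

lemma separates_mono: "separates E F X Y \<Longrightarrow> F \<subseteq> F' \<Longrightarrow> separates E F' X Y"
proof -
  assume "separates E F X Y" "F \<subseteq> F'"
  moreover from \<open>F \<subseteq> F'\<close> have "(adj (E - F'))\<^sup>* \<subseteq> (adj (E - F))\<^sup>*"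
    unfolding adj_def by (intro rtrancl_mono) auto
  ultimately show ?thesis
    unfolding separates_def by blast
qed

lemma wgraph_finite_edges: "wgraph Vs E w \<Longrightarrow> finite E"
  unfolding wgraph_def by (meson Pow_iff finite_Pow_iff finite_subset subsetI)

lemma mincut_is_min:
  assumes "wgraph Vs E w" "X \<inter> Y = {}"
  shows "\<exists>F. F \<subseteq> E \<and> separates E F X Y \<and> mincut E w X Y = sum w F"
    and "F \<subseteq> E \<Longrightarrow> separates E F X Y \<Longrightarrow> mincut E w X Y \<le> sum w F"
proof -
  define cuts where "cuts = {sum w F | F. F \<subseteq> E \<and> separates E F X Y}"
  have "cuts \<subseteq> sum w ` Pow E"
    unfolding cuts_def by blast
  then have "finite cuts"
    using wgraph_finite_edges[OF assms(1)] by (meson finite_Pow_iff finite_imageI finite_subset)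
  have "separates E E X Y"
    using assms(2) unfolding separates_def adj_def by simp blast
  then have "cuts \<noteq> {}"
    unfolding cuts_def by blast
  have mincut: "mincut E w X Y = Min cuts"
    unfolding mincut_def cuts_def ..
  show "\<exists>F. F \<subseteq> E \<and> separates E F X Y \<and> mincut E w X Y = sum w F"
    using Min_in[OF \<open>finite cuts\<close> \<open>cuts \<noteq> {}\<close>] unfolding mincut by (auto simp: cuts_def)
  show "mincut E w X Y \<le> sum w F" if "F \<subseteq> E" "separates E F X Y"
    using Min_le[OF \<open>finite cuts\<close>] that unfolding mincut cuts_def by blast
qed

lemma mincut_nonneg_and_eq_0_iff:
  assumes "wgraph Vs E w" "X \<inter> Y = {}"
  shows "0 \<le> mincut E w X Y"
    and "mincut E w X Y = 0 \<longleftrightarrow> separates E {e\<in>E. w e = 0} X Y"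
proof -
  have nonneg: "\<forall>e\<in>E. 0 \<le> w e"
    using assms(1) unfolding wgraph_def by blast
  obtain F where F: "F \<subseteq> E" "separates E F X Y" "mincut E w X Y = sum w F"
    using mincut_is_min(1)[OF assms] by blast
  then show nonneg_mincut: "0 \<le> mincut E w X Y"
    using nonneg by (auto intro: sum_nonneg)
  show "mincut E w X Y = 0 \<longleftrightarrow> separates E {e\<in>E. w e = 0} X Y"
  proof
    assume "mincut E w X Y = 0"
    then have "sum w F = 0"
      using F(3) by simp
    moreover have "finite F" "\<forall>e\<in>F. 0 \<le> w e"
      using F(1) wgraph_finite_edges[OF assms(1)] nonneg finite_subset by auto
    ultimately have "\<forall>e\<in>F. w e = 0"
      using sum_nonneg_eq_0_iff by blast
    then have "F \<subseteq> {e\<in>E. w e = 0}"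
      using F(1) by blast
    with F(2) show "separates E {e\<in>E. w e = 0} X Y"
      by (rule separates_mono)
  next
    assume "separates E {e\<in>E. w e = 0} X Y"
    then have "mincut E w X Y \<le> 0"
      using mincut_is_min(2)[OF assms, of "{e\<in>E. w e = 0}"] by simp
    with nonneg_mincut show "mincut E w X Y = 0"
      by linarith
  qed
qed

lemma graph_model_eq_0_iff:
  assumes "graph_model Vs E w b S" "R \<noteq> {}"
  shows "S R = 0 \<longleftrightarrow> separates E {e\<in>E. w e = 0} (b ` R) (b ` (UNIV - R))"
proof -
  have "wgraph Vs E w" "inj b" "mincut E w (b ` R) (b ` (UNIV - R)) = S R"
    using assms unfolding graph_model_def by auto
  moreover from \<open>inj b\<close> have "b ` R \<inter> b ` (UNIV - R) = {}"
    by (auto dest: injD)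
  ultimately show ?thesis
    using mincut_nonneg_and_eq_0_iff(2)[of Vs E w "b ` R" "b ` (UNIV - R)"] by simp
qed

lemma graph_model_pair_component:
  assumes "graph_model Vs E w b S" "r \<noteq> s" "S {r, s} = 0" "0 < S {r}"
  shows "(b r, b s) \<in> (adj (E - {e\<in>E. w e = 0}))\<^sup>*"
    and "q \<notin> {r, s} \<Longrightarrow> (b r, b q) \<notin> (adj (E - {e\<in>E. w e = 0}))\<^sup>*"
proof -
  have pair: "separates E {e\<in>E. w e = 0} (b ` {r, s}) (b ` (UNIV - {r, s}))"
    using graph_model_eq_0_iff[OF assms(1), of "{r, s}"] assms(3) by simp
  have "b r \<in> b ` {r, s}"
    by simp
  then show outside: "(b r, b q) \<notin> (adj (E - {e\<in>E. w e = 0}))\<^sup>*"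
    if "q \<notin> {r, s}" for q
    using pair that unfolding separates_def by blast
  have "\<not> separates E {e\<in>E. w e = 0} (b ` {r}) (b ` (UNIV - {r}))"
    using graph_model_eq_0_iff[OF assms(1), of "{r}"] assms(4) by simp
  then obtain q where "q \<noteq> r" "(b r, b q) \<in> (adj (E - {e\<in>E. w e = 0}))\<^sup>*"
    unfolding separates_def by blast
  moreover from this have "q = s"
    using outside by blast
  ultimately show "(b r, b s) \<in> (adj (E - {e\<in>E. w e = 0}))\<^sup>*"
    by simp
qed

definition cut_vector ::
  "nat set set \<Rightarrow> (nat set \<Rightarrow> real) \<Rightarrow> (region \<Rightarrow> nat) \<Rightarrow> region set \<Rightarrow> real" where
  "cut_vector E w b R = mincut E w (b ` R) (b ` (UNIV - R))"

lemma cut_vector_in_V_planar: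
  assumes "wgraph Vs E w" "inj b" "range b \<subseteq> Vs" "annulus_drawing Vs E b pos \<gamma>"
  shows "cut_vector E w b \<in> V_planar"
proof -
  have disjoint: "b ` R \<inter> b ` (UNIV - R) = {}" for R
    using \<open>inj b\<close> by (auto dest: injD)
  have "cut_vector E w b {} = 0"
    using mincut_nonneg_and_eq_0_iff(2)[OF assms(1) disjoint[of "{}"]]
    unfolding cut_vector_def separates_def
    by simp
  moreover have "0 \<le> cut_vector E w b R" for R
    using mincut_nonneg_and_eq_0_iff(1)[OF assms(1) disjoint] unfolding cut_vector_def .
  moreover have "graph_model Vs E w b (cut_vector E w b)"
    using assms unfolding graph_model_def cut_vector_def by simp
  ultimately show ?thesis
    using assms(4) unfolding V_planar_def input_vector_def planar_graph_model_def by blast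
qed

lemma cut_vector_eq_0:
  assumes "wgraph Vs E w" "inj b"
    and closed: "\<forall>e\<in>E. e \<inter> b ` R \<noteq> {} \<longrightarrow> e \<subseteq> b ` R"
  shows "cut_vector E w b R = 0"
proof -
  have disjoint: "b ` R \<inter> b ` (UNIV - R) = {}"
    using \<open>inj b\<close> by (auto dest: injD)
  have "y \<in> b ` R" if "x \<in> b ` R" "(x, y) \<in> (adj (E - {e\<in>E. w e = 0}))\<^sup>*" for x y
    using that(2,1)
  proof (induction rule: rtrancl_induct)
    case base
    then show ?case .
  next
    case (step y z)
    then have "{y, z} \<in> E" "{y, z} \<inter> b ` R \<noteq> {}"
      unfolding adj_def by auto
    then show ?case
      using closed by blast
  qed
  then have "separates E {e\<in>E. w e = 0} (b ` R) (b ` (UNIV - R))"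
    using disjoint unfolding separates_def by blast
  then show ?thesis
    using mincut_nonneg_and_eq_0_iff(2)[OF assms(1) disjoint] unfolding cut_vector_def by blast
qed

lemma cut_vector_pos:
  assumes "wgraph Vs E w" "inj b" "{b r, b s} \<in> E" "w {b r, b s} \<noteq> 0" "r \<in> R" "s \<notin> R"
  shows "0 < cut_vector E w b R"
proof -
  have disjoint: "b ` R \<inter> b ` (UNIV - R) = {}"
    using \<open>inj b\<close> by (auto dest: injD)
  have "(b r, b s) \<in> (adj (E - {e\<in>E. w e = 0}))\<^sup>*"
    using assms(3,4) unfolding adj_def by auto
  then have "\<not> separates E {e\<in>E. w e = 0} (b ` R) (b ` (UNIV - R))"
    using assms(5,6) unfolding separates_def by blast
  then show ?thesis
    using mincut_nonneg_and_eq_0_iff[OF assms(1) disjoint] unfolding cut_vector_def by linarith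
qed

section \<open>Components of planar graph models\<close>

definition drawn_component ::
  "nat set set \<Rightarrow> (nat \<Rightarrow> complex) \<Rightarrow> (nat set \<Rightarrow> real \<Rightarrow> complex) \<Rightarrow> nat \<Rightarrow> complex set" where
  "drawn_component E pos \<gamma> x =
     insert (pos x) (\<Union> {path_image (\<gamma> e) | e. e \<in> E \<and> e \<subseteq> {y. (x, y) \<in> (adj E)\<^sup>*}})"

lemma annulus_drawing_edgeD:
  assumes "annulus_drawing Vs E b pos \<gamma>" "e \<in> E"
  obtains u v where "e = {u, v}" "pathstart (\<gamma> e) = pos u" "pathfinish (\<gamma> e) = pos v"
    and "arc (\<gamma> e)" "path_image (\<gamma> e) \<subseteq> annulus"
proof -
  have "\<forall>e\<in>E. arc (\<gamma> e) \<and> path_image (\<gamma> e) \<subseteq> annulus \<and>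
      (\<exists>u v. e = {u, v} \<and> pathstart (\<gamma> e) = pos u \<and> pathfinish (\<gamma> e) = pos v) \<and>
      path_image (\<gamma> e) \<inter> pos ` Vs \<subseteq> pos ` e"
    using assms(1) unfolding annulus_drawing_def by (elim conjE)
  then have "arc (\<gamma> e) \<and> path_image (\<gamma> e) \<subseteq> annulus \<and>
      (\<exists>u v. e = {u, v} \<and> pathstart (\<gamma> e) = pos u \<and> pathfinish (\<gamma> e) = pos v) \<and>
      path_image (\<gamma> e) \<inter> pos ` Vs \<subseteq> pos ` e"
    using assms(2) by (rule bspec)
  then show ?thesis
    using that by (elim conjE exE) simp
qed

lemma annulus_drawingD:
  assumes "annulus_drawing Vs E b pos \<gamma>"
  shows "inj_on pos Vs" "pos ` Vs \<subseteq> annulus"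
    and "\<And>e. e \<in> E \<Longrightarrow> path_image (\<gamma> e) \<inter> pos ` Vs \<subseteq> pos ` e"
    and "\<And>e f. e \<in> E \<Longrightarrow> f \<in> E \<Longrightarrow> e \<noteq> f \<Longrightarrow>
      path_image (\<gamma> e) \<inter> path_image (\<gamma> f) \<subseteq> pos ` (e \<inter> f)"
    and "norm (pos (b RA)) = 1" "norm (pos (b RB)) = 1" "norm (pos (b RC)) = 1"
    and "norm (pos (b RA')) = 2" "norm (pos (b RB')) = 2" "norm (pos (b RC')) = 2"
    and "ccw (pos (b RA)) (pos (b RB)) (pos (b RC))" "ccw (pos (b RA')) (pos (b RB')) (pos (b RC'))"
  using assms unfolding annulus_drawing_def by simp_all

lemma drawn_component_path:
  assumes "annulus_drawing Vs E b pos \<gamma>" "E' \<subseteq> E" "x \<in> Vs" "(x, y) \<in> (adj E')\<^sup>*"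
  obtains p where "path p" "pathstart p = pos x" "pathfinish p = pos y"
    "path_image p \<subseteq> annulus \<inter> drawn_component E' pos \<gamma> x"
proof -
  have "\<exists>p. path p \<and> pathstart p = pos x \<and> pathfinish p = pos y \<and>
      path_image p \<subseteq> annulus \<inter> drawn_component E' pos \<gamma> x"
    using assms(4)
  proof (induction rule: rtrancl_induct)
    case base
    have "pos x \<in> annulus"
      using annulus_drawingD(2)[OF assms(1)] assms(3) by blast
    then show ?case
      by (intro exI[of _ "linepath (pos x) (pos x)"])
        (simp add: drawn_component_def path_def pathstart_def pathfinish_def path_image_def)
  next
    case (step y z)
    then obtain p where p: "path p" "pathstart p = pos x" "pathfinish p = pos y"
      "path_image p \<subseteq> annulus \<inter> drawn_component E' pos \<gamma> x"
      by blast
    define e where "e = {y, z}"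
    have "e \<in> E'"
      using step(2) unfolding adj_def e_def by simp
    with assms(2) obtain u v
      where e: "e = {u, v}" "pathstart (\<gamma> e) = pos u" "pathfinish (\<gamma> e) = pos v"
      "arc (\<gamma> e)" "path_image (\<gamma> e) \<subseteq> annulus"
      by (meson annulus_drawing_edgeD[OF assms(1)] subsetD)
    define q where "q = (if u = y then \<gamma> e else reversepath (\<gamma> e))"
    have "u = y \<and> v = z \<or> u = z \<and> v = y"
      using e(1) unfolding e_def by (auto simp: doubleton_eq_iff)
    then have q: "path q" "pathstart q = pos y" "pathfinish q = pos z"
      "path_image q = path_image (\<gamma> e)"
      using e(2,3) arc_imp_path[OF e(4)] unfolding q_def by auto
    have "e \<subseteq> {w. (x, w) \<in> (adj E')\<^sup>*}"
      using step(1) rtrancl_into_rtrancl[OF step(1,2)] unfolding e_def by simp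
    then have "path_image (\<gamma> e) \<subseteq> drawn_component E' pos \<gamma> x"
      unfolding drawn_component_def using \<open>e \<in> E'\<close> by blast
    then show ?case
      using p q e(5) by (intro exI[of _ "p +++ q"]) (auto simp: path_image_join)
  qed
  then show ?thesis
    using that by blast
qed

lemma drawn_component_vertex:
  assumes drawing: "annulus_drawing Vs E b pos \<gamma>" and "wgraph Vs E w" "E' \<subseteq> E"
    and "x \<in> Vs" "y \<in> Vs" "pos y \<in> drawn_component E' pos \<gamma> x"
  shows "(x, y) \<in> (adj E')\<^sup>*"
proof (cases "pos y = pos x")
  case True
  then show ?thesis
    using annulus_drawingD(1)[OF drawing] assms(4,5) by (auto dest: inj_onD)
next
  case False
  then obtain e
    where e: "e \<in> E'" "e \<subseteq> {z. (x, z) \<in> (adj E')\<^sup>*}" "pos y \<in> path_image (\<gamma> e)"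
    using assms(6) unfolding drawn_component_def by auto
  then have "pos y \<in> pos ` e"
    using annulus_drawingD(3)[OF drawing, of e] assms(3,5) by blast
  moreover have "e \<subseteq> Vs"
    using assms(2,3) e(1) unfolding wgraph_def by blast
  ultimately have "y \<in> e"
    using annulus_drawingD(1)[OF drawing] assms(5) by (auto dest: inj_onD)
  then show ?thesis
    using e(2) by blast
qed

lemma drawn_components_disjoint:
  assumes drawing: "annulus_drawing Vs E b pos \<gamma>" and "wgraph Vs E w" "E' \<subseteq> E"
    and "x1 \<in> Vs" "x2 \<in> Vs" "(x1, x2) \<notin> (adj E')\<^sup>*"
  shows "drawn_component E' pos \<gamma> x1 \<inter> drawn_component E' pos \<gamma> x2 = {}"
proof (rule ccontr)
  define C where "C x = {y. (x, y) \<in> (adj E')\<^sup>*}" for x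
  have "sym ((adj E')\<^sup>*)"
    by (rule sym_rtrancl) (auto simp: sym_def adj_def insert_commute)
  then have "C x1 \<inter> C x2 = {}"
    using assms(6) unfolding C_def by (auto dest: symD intro: rtrancl_trans)
  have edges_in_Vs: "e \<subseteq> Vs" "e \<noteq> {}" if "e \<in> E'" for e
    using assms(2,3) that unfolding wgraph_def by fastforce+
  assume "drawn_component E' pos \<gamma> x1 \<inter> drawn_component E' pos \<gamma> x2 \<noteq> {}"
  then obtain p
    where p1: "p \<in> drawn_component E' pos \<gamma> x1" and p2: "p \<in> drawn_component E' pos \<gamma> x2"
    by blast
  show False
  proof (cases "p \<in> pos ` Vs")
    case True
    then obtain y where "y \<in> Vs" "p = pos y"
      by blast
    then have "y \<in> C x1 \<inter> C x2"
      using drawn_component_vertex[OF assms(1-3)] assms(4,5) p1 p2 unfolding C_def by blast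
    then show False
      using \<open>C x1 \<inter> C x2 = {}\<close> by blast
  next
    case False
    then have "p \<noteq> pos x1" "p \<noteq> pos x2"
      using assms(4,5) by auto
    then obtain e f where e: "e \<in> E'" "e \<subseteq> C x1" "p \<in> path_image (\<gamma> e)"
      and f: "f \<in> E'" "f \<subseteq> C x2" "p \<in> path_image (\<gamma> f)"
      using p1 p2 unfolding drawn_component_def C_def by auto
    show False
    proof (cases "e = f")
      case True
      then show False
        using e f edges_in_Vs(2)[of e] \<open>C x1 \<inter> C x2 = {}\<close> by blast
    next
      case False
      then have "p \<in> pos ` (e \<inter> f)"
        using annulus_drawingD(4)[OF drawing, of e f] e f assms(3) by blast
      then show False
        using \<open>p \<notin> pos ` Vs\<close> edges_in_Vs(1)[of e] e(1) by blast
    qed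
  qed
qed

lemma crossed_pairing_not_planar:
  assumes "S {RA, RA'} = 0" "S {RB, RC'} = 0" "S {RC, RB'} = 0"
    and "0 < S {RA}" "0 < S {RB}" "0 < S {RC}"
  shows "\<not> planar_graph_model S"
proof
  assume "planar_graph_model S"
  then obtain Vs E w b pos \<gamma>
    where model: "graph_model Vs E w b S" and drawing: "annulus_drawing Vs E b pos \<gamma>"
    unfolding planar_graph_model_def by blast
  define E' where "E' = E - {e\<in>E. w e = 0}"
  have "wgraph Vs E w" and b_in: "\<And>r. b r \<in> Vs" and "E' \<subseteq> E"
    using model unfolding graph_model_def E'_def by auto
  have linked:
    "(b RA, b RA') \<in> (adj E')\<^sup>*" "(b RB, b RC') \<in> (adj E')\<^sup>*" "(b RC, b RB') \<in> (adj E')\<^sup>*"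
    using graph_model_pair_component(1)[OF model _ assms(1,4)]
      graph_model_pair_component(1)[OF model _ assms(2,5)]
      graph_model_pair_component(1)[OF model _ assms(3,6)]
    unfolding E'_def by simp_all
  have unlinked:
    "(b RA, b RB) \<notin> (adj E')\<^sup>*" "(b RA, b RC) \<notin> (adj E')\<^sup>*" "(b RB, b RC) \<notin> (adj E')\<^sup>*"
    using graph_model_pair_component(2)[OF model _ assms(1,4), of RB]
      graph_model_pair_component(2)[OF model _ assms(1,4), of RC]
      graph_model_pair_component(2)[OF model _ assms(2,5), of RC]
    unfolding E'_def by simp_all
  obtain g1 g2 g3 where
    g1: "path g1" "pathstart g1 = pos (b RA)" "pathfinish g1 = pos (b RA')"
      "path_image g1 \<subseteq> annulus \<inter> drawn_component E' pos \<gamma> (b RA)" and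
    g2: "path g2" "pathstart g2 = pos (b RB)" "pathfinish g2 = pos (b RC')"
      "path_image g2 \<subseteq> annulus \<inter> drawn_component E' pos \<gamma> (b RB)" and
    g3: "path g3" "pathstart g3 = pos (b RC)" "pathfinish g3 = pos (b RB')"
      "path_image g3 \<subseteq> annulus \<inter> drawn_component E' pos \<gamma> (b RC)"
    using drawn_component_path[OF drawing \<open>E' \<subseteq> E\<close> b_in] linked by metis
  have "annulus_crossing g1" "annulus_crossing g2" "annulus_crossing g3"
    using g1 g2 g3 annulus_drawingD[OF drawing] unfolding annulus_crossing_def by auto
  moreover have "path_image g1 \<inter> path_image g2 = {}" "path_image g1 \<inter> path_image g3 = {}"
    "path_image g2 \<inter> path_image g3 = {}"
    using drawn_components_disjoint[OF drawing \<open>wgraph Vs E w\<close> \<open>E' \<subseteq> E\<close> b_in b_in]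
      unlinked g1(4) g2(4) g3(4) by blast+
  ultimately have "ccw (pos (b RA')) (pos (b RC')) (pos (b RB'))"
    using annulus_crossings_preserve_ccw[of g1 g2 g3] annulus_drawingD(11)[OF drawing] g1 g2 g3
    by simp
  then show False
    using annulus_drawingD(12)[OF drawing] ccw_imp_not_ccw_swap by blast
qed

section \<open>Radial drawings\<close>

lemma radial_segment_point:
  fixes c z :: complex
  assumes "norm c = 1" "z \<in> closed_segment c (2 * c)"
  shows "z = of_real (norm z) * c" "1 \<le> norm z" "norm z \<le> 2"
proof -
  obtain u where u: "0 \<le> u" "u \<le> 1" "z = (1 - u) *\<^sub>R c + u *\<^sub>R (2 * c)"
    using assms(2) unfolding closed_segment_def by blast
  then have "z = of_real (1 + u) * c"
    by (simp add: scaleR_conv_of_real algebra_simps)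
  moreover from this have "norm z = 1 + u"
    using assms(1) u(1) by (simp add: norm_mult del: of_real_add)
  ultimately show "z = of_real (norm z) * c" "1 \<le> norm z" "norm z \<le> 2"
    using u by simp_all
qed

lemma radial_segments_disjoint:
  fixes c d :: complex
  assumes "norm c = 1" "norm d = 1" "c \<noteq> d"
  shows "closed_segment c (2 * c) \<inter> closed_segment d (2 * d) = {}"
  using radial_segment_point[OF assms(1)] radial_segment_point[OF assms(2)] assms(3)
  by (metis (no_types, lifting) disjoint_iff mult_cancel_left norm_eq_zero not_one_le_zero of_real_eq_0_iff)

lemma radial_edge_linepath:
  fixes pos :: "nat \<Rightarrow> complex"
  assumes "e = {u, v}" "norm (pos u) = 1" "pos v = 2 * pos u"
  shows "e = {Min e, Max e}" "pos (Min e) \<noteq> pos (Max e)"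
    and "path_image (linepath (pos (Min e)) (pos (Max e))) = closed_segment (pos u) (2 * pos u)"
proof -
  have "pos u \<noteq> pos v"
    using assms(2,3) by auto
  show "e = {Min e, Max e}"
    using assms(1) by (cases "u \<le> v") (simp_all add: min_def max_def insert_commute)
  then have "{pos (Min e), pos (Max e)} = {pos u, pos v}"
    using assms(1) by (metis image_insert image_empty)
  then show "pos (Min e) \<noteq> pos (Max e)"
    and "path_image (linepath (pos (Min e)) (pos (Max e))) = closed_segment (pos u) (2 * pos u)"
    using \<open>pos u \<noteq> pos v\<close> assms(3) by (auto simp: doubleton_eq_iff closed_segment_commute)
qed

lemma radial_annulus_drawing:
  fixes pos :: "nat \<Rightarrow> complex"
  assumes inj: "inj_on pos Vs" and on_circles: "\<forall>x\<in>Vs. norm (pos x) = 1 \<or> norm (pos x) = 2"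
    and radial: "\<forall>e\<in>E. \<exists>u\<in>Vs. \<exists>v\<in>Vs. e = {u, v} \<and> norm (pos u) = 1 \<and> pos v = 2 * pos u"
    and "\<forall>r\<in>{RA, RB, RC}. norm (pos (b r)) = 1"
    and "\<forall>r\<in>{RA', RB', RC'}. norm (pos (b r)) = 2"
    and "ccw (pos (b RA)) (pos (b RB)) (pos (b RC))" "ccw (pos (b RA')) (pos (b RB')) (pos (b RC'))"
  shows "annulus_drawing Vs E b pos (\<lambda>e. linepath (pos (Min e)) (pos (Max e)))"
  unfolding annulus_drawing_def
proof (intro conjI ballI impI)
  show "pos ` Vs \<subseteq> annulus"
    using on_circles unfolding annulus_def by auto
  fix e assume "e \<in> E"
  then obtain u v where uv: "u \<in> Vs" "v \<in> Vs" "e = {u, v}" "norm (pos u) = 1" "pos v = 2 * pos u"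
    using bspec[OF radial \<open>e \<in> E\<close>] by auto
  note edge = radial_edge_linepath[OF uv(3-5)]
  show "arc (linepath (pos (Min e)) (pos (Max e)))"
    using edge(2) by (simp add: arc_linepath)
  show "path_image (linepath (pos (Min e)) (pos (Max e))) \<subseteq> annulus"
    using radial_segment_point(2,3)[OF uv(4)] unfolding edge(3) annulus_def by auto
  show "\<exists>u v. e = {u, v} \<and> pathstart (linepath (pos (Min e)) (pos (Max e))) = pos u \<and>
      pathfinish (linepath (pos (Min e)) (pos (Max e))) = pos v"
    using edge(1) by auto
  show "path_image (linepath (pos (Min e)) (pos (Max e))) \<inter> pos ` Vs \<subseteq> pos ` e"
  proof
    fix z assume "z \<in> path_image (linepath (pos (Min e)) (pos (Max e))) \<inter> pos ` Vs"
    then have z: "z \<in> closed_segment (pos u) (2 * pos u)" "norm z = 1 \<or> norm z = 2"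
      using on_circles unfolding edge(3) by auto
    then have "z = pos u \<or> z = pos v"
      using radial_segment_point(1)[OF uv(4) z(1)] uv(5) by auto
    then show "z \<in> pos ` e"
      using uv(3) by auto
  qed
next
  fix e f assume "e \<in> E" "f \<in> E" "e \<noteq> f"
  obtain u v where u: "u \<in> Vs" "v \<in> Vs" "e = {u, v}" "norm (pos u) = 1" "pos v = 2 * pos u"
    using bspec[OF radial \<open>e \<in> E\<close>] by auto
  obtain u' v'
    where u': "u' \<in> Vs" "v' \<in> Vs" "f = {u', v'}" "norm (pos u') = 1" "pos v' = 2 * pos u'"
    using bspec[OF radial \<open>f \<in> E\<close>] by auto
  have "pos u \<noteq> pos u'"
  proof
    assume "pos u = pos u'"
    then have "u = u'" "v = v'"
      using inj_onD[OF inj] u u' by simp_all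
    then show False
      using \<open>e \<noteq> f\<close> u(3) u'(3) by simp
  qed
  then show "path_image (linepath (pos (Min e)) (pos (Max e))) \<inter>
      path_image (linepath (pos (Min f)) (pos (Max f))) \<subseteq> pos ` (e \<inter> f)"
    using radial_segments_disjoint[OF u(4) u'(4)]
    unfolding radial_edge_linepath(3)[OF u(3-5)] radial_edge_linepath(3)[OF u'(3-5)] by simp
qed (use assms in auto)

section \<open>Two planar vectors with a non-planar midpoint\<close>

definition boundary_vertex :: "region \<Rightarrow> nat" where
  "boundary_vertex r =
     (case r of RA \<Rightarrow> 0 | RB \<Rightarrow> 1 | RC \<Rightarrow> 2 | RA' \<Rightarrow> 3 | RB' \<Rightarrow> 4 | RC' \<Rightarrow> 5)"

lemma boundary_vertex_simps [simp]:
  "boundary_vertex RA = 0" "boundary_vertex RB = 1" "boundary_vertex RC = 2"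
  "boundary_vertex RA' = 3" "boundary_vertex RB' = 4" "boundary_vertex RC' = 5"
  by (simp_all add: boundary_vertex_def)

lemma inj_boundary_vertex: "inj boundary_vertex"
  by (rule injI) (simp add: boundary_vertex_def split: region.splits)

lemma UNIV_region: "UNIV = {RA, RB, RC, RA', RB', RC'}"
  by (auto intro: region.exhaust)

lemma range_boundary_vertex: "range boundary_vertex = {0, 1, 2, 3, 4, 5}"
  by (simp add: UNIV_region)

definition E_v :: "nat set set" where
  "E_v = {{boundary_vertex RA, boundary_vertex RA'}, {boundary_vertex RB, boundary_vertex RC'}}"

definition E_u :: "nat set set" where
  "E_u = {{boundary_vertex RC, boundary_vertex RB'}}"

definition pos_v :: "nat \<Rightarrow> complex" where
  "pos_v n = [1, \<i>, -1, 2, Complex (6/5) (8/5), 2 * \<i>] ! n"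

definition pos_u :: "nat \<Rightarrow> complex" where
  "pos_u n = [1, \<i>, -1, 2, -2, -2 * \<i>] ! n"

lemma wgraph_E_v: "wgraph (range boundary_vertex) E_v (\<lambda>_. 1)"
  unfolding wgraph_def range_boundary_vertex E_v_def by simp

lemma wgraph_E_u: "wgraph (range boundary_vertex) E_u (\<lambda>_. 1)"
  unfolding wgraph_def range_boundary_vertex E_u_def by simp

lemma norm_Complex_6_8: "norm (Complex (6/5) (8/5)) = 2"
  by (simp add: complex_norm power2_eq_square)

lemma annulus_drawing_E_v:
  "annulus_drawing (range boundary_vertex) E_v boundary_vertex pos_v
     (\<lambda>e. linepath (pos_v (Min e)) (pos_v (Max e)))"
proof (rule radial_annulus_drawing)
  let ?radial = "\<lambda>e. \<exists>u\<in>range boundary_vertex. \<exists>v\<in>range boundary_vertex.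
    e = {u, v} \<and> norm (pos_v u) = 1 \<and> pos_v v = 2 * pos_v u"
  show "inj_on pos_v (range boundary_vertex)"
    unfolding inj_on_def range_boundary_vertex by (simp add: pos_v_def complex_eq_iff)
  show "\<forall>x\<in>range boundary_vertex. norm (pos_v x) = 1 \<or> norm (pos_v x) = 2"
    unfolding range_boundary_vertex by (simp add: pos_v_def norm_Complex_6_8 norm_mult)
  have "?radial {0, 3}"
    by (rule bexI[of _ 0], rule bexI[of _ 3]) (simp_all add: pos_v_def range_boundary_vertex)
  moreover have "?radial {1, 5}"
    by (rule bexI[of _ 1], rule bexI[of _ 5]) (simp_all add: pos_v_def range_boundary_vertex)
  ultimately show "\<forall>e\<in>E_v. ?radial e"
    unfolding E_v_def by simp
qed (simp_all add: pos_v_def ccw_def norm_Complex_6_8 norm_mult)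

lemma annulus_drawing_E_u:
  "annulus_drawing (range boundary_vertex) E_u boundary_vertex pos_u
     (\<lambda>e. linepath (pos_u (Min e)) (pos_u (Max e)))"
proof (rule radial_annulus_drawing)
  let ?radial = "\<lambda>e. \<exists>u\<in>range boundary_vertex. \<exists>v\<in>range boundary_vertex.
    e = {u, v} \<and> norm (pos_u u) = 1 \<and> pos_u v = 2 * pos_u u"
  show "inj_on pos_u (range boundary_vertex)"
    unfolding inj_on_def range_boundary_vertex by (simp add: pos_u_def complex_eq_iff)
  show "\<forall>x\<in>range boundary_vertex. norm (pos_u x) = 1 \<or> norm (pos_u x) = 2"
    unfolding range_boundary_vertex by (simp add: pos_u_def norm_mult)
  have "?radial {2, 4}"
    by (rule bexI[of _ 2], rule bexI[of _ 4]) (simp_all add: pos_u_def range_boundary_vertex)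
  then show "\<forall>e\<in>E_u. ?radial e"
    unfolding E_u_def by simp
qed (simp_all add: pos_u_def ccw_def norm_mult)

definition S_v :: "region set \<Rightarrow> real" where
  "S_v = cut_vector E_v (\<lambda>_. 1) boundary_vertex"

definition S_u :: "region set \<Rightarrow> real" where
  "S_u = cut_vector E_u (\<lambda>_. 1) boundary_vertex"

lemma S_v_in_V_planar: "S_v \<in> V_planar"
  unfolding S_v_def
  using cut_vector_in_V_planar[OF wgraph_E_v inj_boundary_vertex _ annulus_drawing_E_v] by simp

lemma S_u_in_V_planar: "S_u \<in> V_planar"
  unfolding S_u_def
  using cut_vector_in_V_planar[OF wgraph_E_u inj_boundary_vertex _ annulus_drawing_E_u] by simp

lemma S_v_values:
  "S_v {RA, RA'} = 0" "S_v {RB, RC'} = 0" "S_v {RC, RB'} = 0" "0 < S_v {RA}" "0 < S_v {RB}"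
  unfolding S_v_def
  using cut_vector_eq_0[OF wgraph_E_v inj_boundary_vertex]
    cut_vector_pos[OF wgraph_E_v inj_boundary_vertex, of RA RA']
    cut_vector_pos[OF wgraph_E_v inj_boundary_vertex, of RB RC']
  by (simp_all add: E_v_def)

lemma S_u_values: "S_u {RA, RA'} = 0" "S_u {RB, RC'} = 0" "S_u {RC, RB'} = 0" "0 < S_u {RC}"
  unfolding S_u_def
  using cut_vector_eq_0[OF wgraph_E_u inj_boundary_vertex]
    cut_vector_pos[OF wgraph_E_u inj_boundary_vertex, of RC RB']
  by (simp_all add: E_u_def)

theorem theorem3:
  shows "\<exists>v\<in>V_planar. \<exists>u\<in>V_planar. \<exists>t::real. 0 \<le> t \<and> t \<le> 1 \<and>
           (\<lambda>R. t * v R + (1 - t) * u R) \<notin> V_planar"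
proof (rule bexI[OF _ S_v_in_V_planar], rule bexI[OF _ S_u_in_V_planar], intro exI[of _ "1/2"] conjI)
  let ?W = "\<lambda>R. 1/2 * S_v R + (1 - 1/2) * S_u R"
  have "0 \<le> S_v {RC}" "0 \<le> S_u {RA}" "0 \<le> S_u {RB}"
    using S_v_in_V_planar S_u_in_V_planar unfolding V_planar_def input_vector_def by auto
  then have "\<not> planar_graph_model ?W"
    using S_v_values S_u_values by (intro crossed_pairing_not_planar) simp_all
  then show "?W \<notin> V_planar"
    unfolding V_planar_def by simp
qed simp_all

end
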